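(* Let $\mathcal{H}$ be a Hilbert space and $\mathcal{G}$ a normed space. Let $I=\{1,\dots,m\}$, $I_0=\{m+1,\dots,n\}$ (possibly $I_0=\emptyset$), and let $h_i:\mathcal{G}\times\mathcal{H}\to\mathbb{R}$, $i=1,\dots,n$, be jointly continuous functions whose partial gradients $\nabla_x h_i$ are jointly continuous. Define $F(p)=\{x\in\mathcal{H}\mid h_i(p,x)\le 0,\ i\in I,\ h_i(p,x)=0,\ i\in I_0\}$. Let $(p^0,x^0)\in\mathrm{gr}F$ and assume $F$ is lower semicontinuous at $(p^0,x^0)$ relative to $\mathrm{dom}F$. Then the following are equivalent: (a) $F$ is R-regular at $(p^0,x^0)$ relative to $\mathrm{dom}F$; (b) there exists $M>0$ such that for any sequences $p^k\to p^0$ with $p^k\in\mathrm{dom}F$ and $v^k\to x^0$ with $v^k\notin F(p^k)$, one has $\Lambda^M_{v^k}(p^k,x^k)\neq\emptyset$ for all $x^k\in\Pi_{F(p^k)}(v^k)$ and all $k$ sufficiently large.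
   Context: $\mathrm{dom}F=\{p\mid F(p)\neq\emptyset\}$, $\mathrm{gr}F=\{(p,x)\mid x\in F(p)\}$. $F$ is lower semicontinuous at $(p^0,x^0)$ relative to $P$ if for every neighbourhood $V(x^0)$ there is a neighbourhood $V(p^0)$ with $F(p)\cap V(x^0)\neq\emptyset$ for all $p\in V(p^0)\cap P$. $F$ is R-regular at $(p^0,x^0)$ relative to $P$ if there exist $M>0$ and neighbourhoods $V(p^0)$, $V(x^0)$ with $\mathrm{dist}(x,F(p))\le M\max\{0,\ h_i(p,x)\ (i\in I),\ |h_i(p,x)|\ (i\in I_0)\}$ for all $x\in V(x^0)$, $p\in V(p^0)\cap P$. For $v\in\mathcal{H}$, $\Pi_{F(p)}(v)=\{\tilde v\in F(p)\mid\|\tilde v-v\|=\mathrm{dist}(v,F(p))\}$. The Lagrange multiplier sets are $\Lambda_v(p,x)=\{\lambda\in\mathbb{R}^n\mid \frac{x-v}{\|x-v\|}+\sum_{i=1}^n\lambda_i\nabla_x h_i(p,x)=0,\ \lambda_i\ge0,\ \lambda_i h_i(p,x)=0 \text{ for } i\in I\}$ and $\Lambda^M_v(p,x)=\{\lambda\in\Lambda_v(p,x)\mid\sum_{i=1}^n|\lambda_i|\le M\}$. *)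

theory Defs
  imports "HOL-Analysis.Analysis"
begin

definition feas_map ::
  "(nat \<Rightarrow> 'g \<Rightarrow> 'h \<Rightarrow> real) \<Rightarrow> nat \<Rightarrow> nat \<Rightarrow> 'g \<Rightarrow> 'h set" where
  "feas_map h m n p =
     {x. (\<forall>i\<in>{1..m}. h i p x \<le> 0) \<and> (\<forall>i\<in>{m+1..n}. h i p x = 0)}"

definition dom_map :: "('g \<Rightarrow> 'h set) \<Rightarrow> 'g set" where
  "dom_map F = {p. F p \<noteq> {}}"

definition graph_map :: "('g \<Rightarrow> 'h set) \<Rightarrow> ('g \<times> 'h) set" where
  "graph_map F = {(p, x). x \<in> F p}"

definition lsc_rel ::
  "('g::topological_space \<Rightarrow> 'h::topological_space set) \<Rightarrow> 'g set \<Rightarrow> 'g \<Rightarrow> 'h \<Rightarrow> bool" where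
  "lsc_rel F P p0 x0 \<longleftrightarrow>
     (\<forall>V. open V \<and> x0 \<in> V \<longrightarrow>
        (\<exists>U. open U \<and> p0 \<in> U \<and> (\<forall>p\<in>U \<inter> P. F p \<inter> V \<noteq> {})))"

definition residual ::
  "(nat \<Rightarrow> 'g \<Rightarrow> 'h \<Rightarrow> real) \<Rightarrow> nat \<Rightarrow> nat \<Rightarrow> 'g \<Rightarrow> 'h \<Rightarrow> real" where
  "residual h m n p x =
     Max ({0} \<union> (\<lambda>i. h i p x) ` {1..m} \<union> (\<lambda>i. \<bar>h i p x\<bar>) ` {m+1..n})"

definition R_regular_rel ::
  "(nat \<Rightarrow> 'g::real_normed_vector \<Rightarrow> 'h::real_normed_vector \<Rightarrow> real) \<Rightarrow> nat \<Rightarrow> nat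
    \<Rightarrow> 'g set \<Rightarrow> 'g \<Rightarrow> 'h \<Rightarrow> bool" where
  "R_regular_rel h m n P p0 x0 \<longleftrightarrow>
     (\<exists>M>0. \<exists>U V. open U \<and> p0 \<in> U \<and> open V \<and> x0 \<in> V \<and>
        (\<forall>x\<in>V. \<forall>p\<in>U \<inter> P.
           infdist x (feas_map h m n p) \<le> M * residual h m n p x))"

definition proj_set :: "'h::metric_space set \<Rightarrow> 'h \<Rightarrow> 'h set" where
  "proj_set S v = {w \<in> S. dist w v = infdist v S}"

text \<open>Lagrange multipliers, lambda in R^n represented as nat \<Rightarrow> real vanishing outside {1..n}.
  gradx i p x is the partial gradient of h_i with respect to x.\<close>
definition Lagr ::
  "(nat \<Rightarrow> 'g \<Rightarrow> 'h \<Rightarrow> real) \<Rightarrow> (nat \<Rightarrow> 'g \<Rightarrow> 'h \<Rightarrow> 'h::real_normed_vector)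
    \<Rightarrow> nat \<Rightarrow> nat \<Rightarrow> 'h \<Rightarrow> 'g \<Rightarrow> 'h \<Rightarrow> (nat \<Rightarrow> real) set" where
  "Lagr h gradx m n v p x =
     {lam. (\<forall>i. i \<notin> {1..n} \<longrightarrow> lam i = 0) \<and>
           (1 / norm (x - v)) *\<^sub>R (x - v) + (\<Sum>i=1..n. lam i *\<^sub>R gradx i p x) = 0 \<and>
           (\<forall>i\<in>{1..m}. lam i \<ge> 0 \<and> lam i * h i p x = 0)}"

definition LagrM ::
  "real \<Rightarrow> (nat \<Rightarrow> 'g \<Rightarrow> 'h \<Rightarrow> real) \<Rightarrow> (nat \<Rightarrow> 'g \<Rightarrow> 'h \<Rightarrow> 'h::real_normed_vector)
    \<Rightarrow> nat \<Rightarrow> nat \<Rightarrow> 'h \<Rightarrow> 'g \<Rightarrow> 'h \<Rightarrow> (nat \<Rightarrow> real) set" where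
  "LagrM M h gradx m n v p x =
     {lam \<in> Lagr h gradx m n v p x. (\<Sum>i=1..n. \<bar>lam i\<bar>) \<le> M}"

end

theory Submission
  imports Defs
begin

text \<open>
  (a) \<Longrightarrow> (b): by R-regularity, a nearest point x of v in F(p) is a local minimiser of the
  exact penalty y \<mapsto> \<parallel>y - v\<parallel> + M * residual(p, y). Hence no direction decreases this function
  to first order, and a minimum-norm point of sgn(x - v) + M * conv(active gradients) yields
  multipliers of l1-norm at most M.

  (b) \<Longrightarrow> (a): if R-regularity fails, there are p_k \<rightarrow> p0 and x_k \<rightarrow> x0 with
  (k+1) * residual(p_k, x_k) < dist(x_k, F(p_k)). In a Hilbert space the points having a nearest
  point in a closed set are dense, so x_k may be moved slightly to a point w_k with a nearest
  point y_k. The multipliers at (w_k, y_k) and the continuity of the gradients give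
  \<parallel>y_k - w_k\<parallel> \<le> 2M * residual(p_k, w_k), which is impossible for large k.
\<close>

lemma has_derivative_inner_linearization_bound:
  fixes f :: "'h::real_inner \<Rightarrow> real" and G :: "'h \<Rightarrow> 'h"
  assumes der: "\<And>z. (f has_derivative (\<lambda>u. G z \<bullet> u)) (at z)"
    and osc: "\<And>t. t \<in> {0..1} \<Longrightarrow> norm (G (y + t *\<^sub>R (w - y)) - G y) \<le> B"
  shows "\<bar>f w - f y - G y \<bullet> (w - y)\<bar> \<le> norm (w - y) * B"
proof -
  define \<phi> where "\<phi> t = f (y + t *\<^sub>R (w - y))" for t
  define D where "D t = G (y + t *\<^sub>R (w - y)) \<bullet> (w - y)" for t
  have "(\<phi> has_vector_derivative D t) (at t within {0..1})" for t
  proof -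
    have "((\<lambda>t. y + t *\<^sub>R (w - y)) has_derivative (\<lambda>s. s *\<^sub>R (w - y))) (at t within {0..1})"
      by (auto intro!: derivative_eq_intros)
    from has_derivative_compose[OF this der]
    show ?thesis
      by (simp add: has_vector_derivative_def \<phi>_def[abs_def] D_def mult.commute)
  qed
  moreover have "norm (D t - D 0) \<le> norm (w - y) * B" if "t \<in> {0..1}" for t
  proof -
    have "norm (D t - D 0) = \<bar>(G (y + t *\<^sub>R (w - y)) - G y) \<bullet> (w - y)\<bar>"
      by (simp add: D_def inner_diff_left)
    also have "\<dots> \<le> norm (G (y + t *\<^sub>R (w - y)) - G y) * norm (w - y)"
      by (rule Cauchy_Schwarz_ineq2)
    also have "\<dots> \<le> B * norm (w - y)"
      by (rule mult_right_mono[OF osc[OF that]]) simp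
    finally show ?thesis by (simp add: mult.commute)
  qed
  ultimately have "norm (\<phi> 1 - \<phi> 0 - (1 - 0) *\<^sub>R D 0) \<le> norm (1 - 0::real) * (norm (w - y) * B)"
    by (intro vector_differentiable_bound_linearization[where S="{0..1}"])
       (auto simp: closed_segment_eq_real_ivl)
  then show ?thesis by (simp add: \<phi>_def D_def)
qed

lemma has_real_derivative_right_upper_bound:
  assumes "(f has_real_derivative D) (at_right 0)" "e > 0"
  shows "\<forall>\<^sub>F t in at_right 0. f t \<le> f 0 + t * (D + e)"
proof -
  have "((\<lambda>t. (f t - f 0) / t) \<longlongrightarrow> D) (at_right 0)"
    using assms(1) by (simp add: has_field_derivative_iff)
  then have "\<forall>\<^sub>F t in at_right 0. (f t - f 0) / t < D + e"
    by (rule order_tendstoD(2)) (use assms(2) in simp)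
  with eventually_at_right_less[of 0] show ?thesis
    by eventually_elim (simp add: pos_divide_less_eq mult.commute)
qed

lemma has_derivative_right_upper_bound_along:
  fixes f :: "'a::real_normed_vector \<Rightarrow> real"
  assumes "(f has_derivative f') (at x)" "e > 0"
  shows "\<forall>\<^sub>F t in at_right 0. f (x + t *\<^sub>R d) \<le> f x + t * (f' d + e)"
proof -
  have "((\<lambda>t. x + t *\<^sub>R d) has_derivative (\<lambda>t. t *\<^sub>R d)) (at 0 within {0<..})"
    by (auto intro!: derivative_eq_intros)
  from has_derivative_compose[OF this, of f f'] assms(1)
  have "((\<lambda>t. f (x + t *\<^sub>R d)) has_derivative (\<lambda>t. f' (t *\<^sub>R d))) (at 0 within {0<..})"
    by simp
  moreover have "(\<lambda>t. f' (t *\<^sub>R d)) = (*) (f' d)"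
    using linear_scale[OF has_derivative_linear[OF assms(1)]] by (auto simp: mult.commute)
  ultimately have "((\<lambda>t. f (x + t *\<^sub>R d)) has_real_derivative f' d) (at_right 0)"
    by (simp add: has_field_derivative_def)
  from has_real_derivative_right_upper_bound[OF this assms(2)] show ?thesis by simp
qed

lemma Cauchy_if_dist_Suc_le_geometric:
  fixes f :: "nat \<Rightarrow> 'a::metric_space"
  assumes step: "\<And>n. dist (f (Suc n)) (f n) \<le> C * (1/2)^n"
  shows "Cauchy f" and "dist (f n) (f 0) \<le> 2 * C"
proof -
  have tail: "dist (f (m + k)) (f m) \<le> 2 * C * (1/2)^m - 2 * C * (1/2)^(m + k)" for m k
  proof (induction k)
    case (Suc k)
    have "dist (f (m + Suc k)) (f m) \<le> dist (f (Suc (m + k))) (f (m + k)) + dist (f (m + k)) (f m)"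
      by (simp add: dist_triangle)
    also have "\<dots> \<le> C * (1/2)^(m + k) + (2 * C * (1/2)^m - 2 * C * (1/2)^(m + k))"
      using step Suc by (intro add_mono) auto
    finally show ?case by simp
  qed simp
  have "C \<ge> 0" using order_trans[OF zero_le_dist step[of 0]] by simp
  then have le: "dist (f n) (f m) \<le> 2 * C * (1/2)^m" if "m \<le> n" for m n
  proof -
    have "0 \<le> 2 * C * (1/2::real)^n" using \<open>C \<ge> 0\<close> by simp
    then show ?thesis using tail[of m "n - m"] that by simp
  qed
  show "dist (f n) (f 0) \<le> 2 * C" using le[of 0 n] by simp
  show "Cauchy f"
  proof (rule metric_CauchyI)
    fix e :: real assume "e > 0"
    have "(\<lambda>m. 2 * C * (1/2::real)^m) \<longlonglongrightarrow> 0"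
      by (intro tendsto_mult_right_zero LIMSEQ_realpow_zero) auto
    then have "\<forall>\<^sub>F m in sequentially. 2 * C * (1/2::real)^m < e / 2"
      by (rule order_tendstoD(2)) (use \<open>e > 0\<close> in simp)
    then obtain M where M: "\<And>m. m \<ge> M \<Longrightarrow> 2 * C * (1/2::real)^m < e / 2"
      unfolding eventually_sequentially by blast
    have "dist (f m) (f n) < e" if "m \<ge> M" "n \<ge> M" for m n
      using dist_triangle2[of "f m" "f n" "f M"] le[OF that(1)] le[OF that(2)] M[of M] by linarith
    then show "\<exists>M. \<forall>m\<ge>M. \<forall>n\<ge>M. dist (f m) (f n) < e" by blast
  qed
qed

lemma LIMSEQ_if_dist_le_const_over_Suc:
  fixes f :: "nat \<Rightarrow> 'a::metric_space"
  assumes "\<And>k. dist (f k) l \<le> C / real (Suc k)"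
  shows "f \<longlonglongrightarrow> l"
proof (rule tendsto_dist_iff[THEN iffD2], rule Lim_null_comparison)
  show "(\<lambda>k. C * inverse (real (Suc k))) \<longlonglongrightarrow> 0"
    by (rule tendsto_mult_right_zero[OF LIMSEQ_inverse_real_of_nat])
  show "\<forall>\<^sub>F k in sequentially. norm (dist (f k) l) \<le> C * inverse (real (Suc k))"
    using assms by (simp add: divide_inverse)
qed

lemma joint_continuity_uniform_radius:
  fixes f :: "nat \<Rightarrow> 'a::metric_space \<Rightarrow> 'b::metric_space \<Rightarrow> 'c::metric_space"
  assumes "finite I" "\<And>i. i \<in> I \<Longrightarrow> continuous_on UNIV (\<lambda>(p, x). f i p x)" "e > 0"
  obtains \<delta> where "\<delta> > 0"
    "\<And>i p x. i \<in> I \<Longrightarrow> dist p p0 < \<delta> \<Longrightarrow> dist x x0 < \<delta> \<Longrightarrow> dist (f i p x) (f i p0 x0) < e"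
proof -
  have "\<forall>\<^sub>F q in nhds (p0, x0). \<forall>i\<in>I. dist ((\<lambda>(p, x). f i p x) q) (f i p0 x0) < e"
  proof (rule eventually_ball_finite[OF assms(1)], rule ballI)
    fix i assume "i \<in> I"
    then have "((\<lambda>(p, x). f i p x) \<longlongrightarrow> f i p0 x0) (nhds (p0, x0))"
      using assms(2) by (fastforce simp: continuous_on_eq_continuous_at isCont_def tendsto_at_iff_tendsto_nhds)
    then show "\<forall>\<^sub>F q in nhds (p0, x0). dist ((\<lambda>(p, x). f i p x) q) (f i p0 x0) < e"
      using assms(3) by (rule tendstoD)
  qed
  then obtain d where d: "d > 0" "\<And>q. dist q (p0, x0) < d \<Longrightarrow> \<forall>i\<in>I. dist ((\<lambda>(p, x). f i p x) q) (f i p0 x0) < e"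
    unfolding eventually_nhds_metric by blast
  show thesis
  proof (rule that[of "d/2"])
    fix i p x assume "i \<in> I" "dist p p0 < d/2" "dist x x0 < d/2"
    moreover have "dist (p, x) (p0, x0) \<le> dist p p0 + dist x x0"
      unfolding dist_Pair_Pair by (rule sqrt_sum_squares_le_sum) simp_all
    ultimately show "dist (f i p x) (f i p0 x0) < e" using d(2)[of "(p, x)"] by auto
  qed (use d in simp)
qed

section \<open>Points with a nearest point are dense\<close>

lemma norm_sq_convex_combination:
  fixes z c y :: "'a::real_inner"
  shows "(norm (z - ((1 - t) *\<^sub>R c + t *\<^sub>R y)))\<^sup>2
    = (1 - t) * (norm (z - c))\<^sup>2 + t * (norm (z - y))\<^sup>2 - t * (1 - t) * (norm (c - y))\<^sup>2"
proof -
  have "z - ((1 - t) *\<^sub>R c + t *\<^sub>R y) = (1 - t) *\<^sub>R (z - c) + t *\<^sub>R (z - y)"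
    by (simp add: algebra_simps)
  moreover have "c - y = (z - y) - (z - c)" by simp
  ultimately show ?thesis
    unfolding power2_norm_eq_inner
    by (simp add: inner_diff_left inner_diff_right inner_add_left inner_add_right inner_commute
        algebra_simps power2_eq_square)
qed

lemma infdist_sq_approx:
  assumes "A \<noteq> {}" "e > 0"
  obtains a where "a \<in> A" "(dist a x)\<^sup>2 \<le> (infdist x A)\<^sup>2 + e"
proof -
  have "infdist x A < sqrt ((infdist x A)\<^sup>2 + e)"
    using assms(2) by (intro real_less_rsqrt) simp
  then obtain a where "a \<in> A" "dist x a < sqrt ((infdist x A)\<^sup>2 + e)"
    using assms(1) by (auto simp: infdist_notempty cINF_less_iff)
  moreover from this(2) have "(dist a x)\<^sup>2 < (sqrt ((infdist x A)\<^sup>2 + e))\<^sup>2"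
    by (intro power_strict_mono) (auto simp: dist_commute)
  ultimately show thesis using assms(2) by (intro that) auto
qed

lemma dist_sq_le_of_near_points_of_convex_combination:
  fixes c y y' :: "'a::real_inner"
  assumes t: "0 \<le> t" "t \<le> 1"
    and y: "y \<in> F" "(dist y c)\<^sup>2 \<le> (infdist c F)\<^sup>2 + \<epsilon>"
    and y': "y' \<in> F" "(dist y' c')\<^sup>2 \<le> (infdist c' F)\<^sup>2 + \<epsilon>'"
    and c': "c' = (1 - t) *\<^sub>R c + t *\<^sub>R y"
  shows "t * (dist y' y)\<^sup>2 \<le> \<epsilon> + \<epsilon>'"
proof -
  define \<kappa> where "\<kappa> = t * (1 - t) * (dist c y)\<^sup>2"
  have y'_c': "(dist y' c')\<^sup>2 = (1 - t) * (dist y' c)\<^sup>2 + t * (dist y' y)\<^sup>2 - \<kappa>"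
    using norm_sq_convex_combination[of y' t c y] by (simp add: c' \<kappa>_def dist_norm)
  have y_c': "(dist y c')\<^sup>2 = (1 - t) * (dist y c)\<^sup>2 - \<kappa>"
    using norm_sq_convex_combination[of y t c y] by (simp add: c' \<kappa>_def dist_norm)
  have "(infdist c' F)\<^sup>2 \<le> (dist y c')\<^sup>2"
    using infdist_le[OF y(1), of c'] by (simp add: power_mono infdist_nonneg dist_commute)
  moreover have "(infdist c F)\<^sup>2 \<le> (dist y' c)\<^sup>2"
    using infdist_le[OF y'(1), of c] by (simp add: power_mono infdist_nonneg dist_commute)
  then have "(1 - t) * (dist y c)\<^sup>2 \<le> (1 - t) * ((dist y' c)\<^sup>2 + \<epsilon>)"
    using y(2) t by (intro mult_left_mono) auto
  moreover have "(infdist c F)\<^sup>2 \<le> (dist y c)\<^sup>2"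
    using infdist_le[OF y(1), of c] by (simp add: power_mono infdist_nonneg dist_commute)
  then have "\<epsilon> \<ge> 0" using y(2) by linarith
  then have "(1 - t) * \<epsilon> \<le> \<epsilon>" using t by (simp add: mult_left_le_one_le)
  ultimately show ?thesis
    using y'(2) y'_c' y_c' by (simp add: distrib_left)
qed

text \<open>
  The centre c_n moves a fraction t_n towards an eps_n-nearest point y_n of F. By
  norm_sq_convex_combination this forces y_(n+1) close to y_n, so for geometric t_n and eps_n
  both sequences converge, and the limit of y_n is an exact nearest point of the limit of c_n.
\<close>

lemma approximate_proximal_iteration:
  fixes c y :: "nat \<Rightarrow> 'a::real_inner"
  assumes t: "\<And>n. 0 \<le> t n" "\<And>n. t n \<le> 1"
    and yF: "\<And>n. y n \<in> F" and y_near: "\<And>n. (dist (y n) (c n))\<^sup>2 \<le> (infdist (c n) F)\<^sup>2 + \<epsilon> n"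
    and \<epsilon>: "\<And>n. 0 \<le> \<epsilon> (Suc n)" "\<And>n. 2 * \<epsilon> (Suc n) \<le> \<epsilon> n"
    and cS: "\<And>n. c (Suc n) = (1 - t n) *\<^sub>R c n + t n *\<^sub>R y n"
  shows "(dist (y n) (c n))\<^sup>2 \<le> (infdist (c 0) F)\<^sup>2 + 2 * \<epsilon> 0 - \<epsilon> n"
    and "dist (c (Suc n)) (c n) = t n * dist (y n) (c n)"
    and "t n * (dist (y (Suc n)) (y n))\<^sup>2 \<le> \<epsilon> n + \<epsilon> (Suc n)"
proof -
  show "(dist (y n) (c n))\<^sup>2 \<le> (infdist (c 0) F)\<^sup>2 + 2 * \<epsilon> 0 - \<epsilon> n"
  proof (induction n)
    case (Suc n)
    have "y n - c (Suc n) = (1 - t n) *\<^sub>R (y n - c n)" by (simp add: cS algebra_simps)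
    then have "dist (y n) (c (Suc n)) \<le> dist (y n) (c n)"
      using t[of n] by (simp add: dist_norm mult_left_le_one_le)
    then have "infdist (c (Suc n)) F \<le> dist (y n) (c n)"
      using infdist_le[OF yF, of "c (Suc n)" n] by (simp add: dist_commute)
    then have "(infdist (c (Suc n)) F)\<^sup>2 \<le> (dist (y n) (c n))\<^sup>2"
      by (simp add: power_mono infdist_nonneg)
    then show ?case using y_near[of "Suc n"] Suc \<epsilon>[of n] by linarith
  qed (use y_near[of 0] in simp)
  have "c (Suc n) - c n = t n *\<^sub>R (y n - c n)" by (simp add: cS algebra_simps)
  then show "dist (c (Suc n)) (c n) = t n * dist (y n) (c n)"
    using t[of n] by (simp add: dist_norm)
  show "t n * (dist (y (Suc n)) (y n))\<^sup>2 \<le> \<epsilon> n + \<epsilon> (Suc n)"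
    by (rule dist_sq_le_of_near_points_of_convex_combination[OF t yF y_near yF y_near cS])
qed

lemma nearest_point_of_approximate_limits:
  assumes "closed F" and yF: "\<And>n. y n \<in> F"
    and y_near: "\<And>n. (dist (y n) (c n))\<^sup>2 \<le> (infdist (c n) F)\<^sup>2 + \<epsilon> n"
    and Y: "y \<longlonglongrightarrow> Y" and W: "c \<longlonglongrightarrow> W" and \<epsilon>: "\<epsilon> \<longlonglongrightarrow> 0"
  shows "Y \<in> F" and "dist Y W = infdist W F"
proof -
  show YF: "Y \<in> F" using closed_sequentially[OF assms(1) _ Y] yF by blast
  have "(dist Y W)\<^sup>2 \<le> (infdist W F)\<^sup>2 + 0"
  proof (rule tendsto_le[OF sequentially_bot])
    show "(\<lambda>n. (infdist (c n) F)\<^sup>2 + \<epsilon> n) \<longlonglongrightarrow> (infdist W F)\<^sup>2 + 0"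
      using W \<epsilon> by (intro tendsto_intros)
    show "(\<lambda>n. (dist (y n) (c n))\<^sup>2) \<longlonglongrightarrow> (dist Y W)\<^sup>2" using W Y by (intro tendsto_intros)
    show "\<forall>\<^sub>F n in sequentially. (dist (y n) (c n))\<^sup>2 \<le> (infdist (c n) F)\<^sup>2 + \<epsilon> n"
      using y_near by (intro always_eventually allI)
  qed
  then have "dist Y W \<le> infdist W F"
    using power2_le_imp_le[OF _ infdist_nonneg] by simp
  then show "dist Y W = infdist W F"
    using infdist_le[OF YF, of W] by (simp add: dist_commute)
qed

lemma dense_points_with_nearest_point:
  fixes F :: "'a::{real_inner, complete_space} set"
  assumes "closed F" "F \<noteq> {}" "e > 0"
  obtains w y where "dist w v < e" "y \<in> F" "dist y w = infdist w F"
proof -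
  have "\<exists>z. z \<in> F \<and> (dist z c)\<^sup>2 \<le> (infdist c F)\<^sup>2 + \<epsilon>" if "\<epsilon> > 0" for \<epsilon> c
    using infdist_sq_approx[OF assms(2) that] by blast
  then obtain near where near: "\<And>\<epsilon> c. \<epsilon> > 0 \<Longrightarrow> near \<epsilon> c \<in> F \<and> (dist (near \<epsilon> c) c)\<^sup>2 \<le> (infdist c F)\<^sup>2 + \<epsilon>"
    by (metis (no_types))
  define R where "R = infdist v F + 2"
  define a where "a = min 1 (e / (4 * R))"
  define t where "t n = a * (1/2)^n" for n :: nat
  define \<epsilon> where "\<epsilon> n = a * (1/8)^n" for n :: nat
  define c where "c = rec_nat v (\<lambda>n c. (1 - t n) *\<^sub>R c + t n *\<^sub>R near (\<epsilon> n) c)"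
  define y where "y n = near (\<epsilon> n) (c n)" for n
  have R: "R > 0" by (simp add: R_def infdist_nonneg add_nonneg_pos)
  have a: "0 < a" "a \<le> 1" "4 * a * R \<le> e"
    using assms(3) R by (auto simp: a_def min_def field_simps)
  have t: "0 < t n" "t n \<le> 1" for n
    using a by (auto simp: t_def intro!: mult_le_one power_le_one)
  have \<epsilon>: "\<epsilon> n > 0" "2 * \<epsilon> (Suc n) \<le> \<epsilon> n" for n using a by (simp_all add: \<epsilon>_def)
  have c0: "c 0 = v" and cS: "c (Suc n) = (1 - t n) *\<^sub>R c n + t n *\<^sub>R y n" for n
    by (simp_all add: c_def y_def)
  have yF: "y n \<in> F" and y_near: "(dist (y n) (c n))\<^sup>2 \<le> (infdist (c n) F)\<^sup>2 + \<epsilon> n" for n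
    using near[OF \<epsilon>(1)] by (simp_all add: y_def)
  note iteration = approximate_proximal_iteration[where t=t and c=c and y=y and \<epsilon>=\<epsilon>,
      OF less_imp_le[OF t(1)] t(2) yF y_near less_imp_le[OF \<epsilon>(1)] \<epsilon>(2) cS]
  have yc_R: "dist (y n) (c n) \<le> R" for n
  proof (rule power2_le_imp_le)
    have "R\<^sup>2 = (infdist v F)\<^sup>2 + 4 * infdist v F + 4"
      by (simp add: R_def power2_eq_square algebra_simps)
    moreover have "(dist (y n) (c n))\<^sup>2 \<le> (infdist v F)\<^sup>2 + 2 * a - \<epsilon> n"
      using iteration(1)[of n] by (simp add: c0 \<epsilon>_def)
    ultimately show "(dist (y n) (c n))\<^sup>2 \<le> R\<^sup>2"
      using a \<epsilon>(1)[of n] infdist_nonneg[of v F] by linarith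
  qed (use R in simp)
  have c_step: "dist (c (Suc n)) (c n) \<le> (a * R) * (1/2)^n" for n
    using iteration(2)[of n] mult_left_mono[OF yc_R less_imp_le[OF t(1)]] by (simp add: t_def mult_ac)
  have y_step: "dist (y (Suc n)) (y n) \<le> 2 * (1/2)^n" for n
  proof -
    have "t n * (dist (y (Suc n)) (y n))\<^sup>2 \<le> \<epsilon> n + \<epsilon> (Suc n)" by (rule iteration(3))
    also have "\<dots> \<le> 2 * \<epsilon> n" using \<epsilon>[of n] by simp
    also have "\<dots> = t n * (2 * (1/4)^n)" by (simp add: \<epsilon>_def t_def power_mult_distrib[symmetric])
    finally have "(dist (y (Suc n)) (y n))\<^sup>2 \<le> 2 * (1/4)^n" using t[of n] by simp
    also have "\<dots> \<le> (2 * (1/2)^n)\<^sup>2" by (simp add: power_mult_distrib[symmetric] power2_eq_square)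
    finally show ?thesis by (rule power2_le_imp_le) simp
  qed
  obtain W Y where W: "c \<longlonglongrightarrow> W" and Y: "y \<longlonglongrightarrow> Y"
    using Cauchy_if_dist_Suc_le_geometric(1)[OF c_step] Cauchy_if_dist_Suc_le_geometric(1)[OF y_step]
    by (auto simp: Cauchy_convergent_iff convergent_def)
  have "\<epsilon> \<longlonglongrightarrow> 0"
    unfolding \<epsilon>_def by (intro tendsto_mult_right_zero LIMSEQ_realpow_zero) simp_all
  note limit = nearest_point_of_approximate_limits[OF assms(1) yF y_near Y W this]
  have "dist W v \<le> 2 * (a * R)"
    using Cauchy_if_dist_Suc_le_geometric(2)[OF c_step]
    by (intro tendsto_upperbound[OF tendsto_dist[OF W tendsto_const]]) (simp_all add: c0)
  then have "dist W v < e" using a mult_pos_pos[OF a(1) R] by linarith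
  with limit show thesis by (intro that)
qed

section \<open>Exact penalty and Lagrange multipliers\<close>

lemma residual_nonneg: "0 \<le> residual h m n p x"
  unfolding residual_def by (rule Max_ge) simp_all

lemma residual_ge_ineq: "i \<in> {1..m} \<Longrightarrow> h i p x \<le> residual h m n p x"
  unfolding residual_def by (rule Max_ge) simp_all

lemma residual_ge_eq: "i \<in> {m+1..n} \<Longrightarrow> \<bar>h i p x\<bar> \<le> residual h m n p x"
  unfolding residual_def by (rule Max_ge) simp_all

lemma residual_le:
  assumes "0 \<le> T" "\<And>i. i \<in> {1..m} \<Longrightarrow> h i p x \<le> T" "\<And>i. i \<in> {m+1..n} \<Longrightarrow> \<bar>h i p x\<bar> \<le> T"
  shows "residual h m n p x \<le> T"
  unfolding residual_def using assms by (subst Max_le_iff) auto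

lemma eventually_residual_le:
  fixes h :: "nat \<Rightarrow> 'g \<Rightarrow> 'h::t2_space \<Rightarrow> real"
  assumes mn: "m \<le> n" and cont: "\<And>i. i \<in> {1..n} \<Longrightarrow> isCont (h i p) x" and "\<eta> > 0"
  shows "\<forall>\<^sub>F w in nhds x. residual h m n p w \<le> residual h m n p x + \<eta>"
proof -
  have "\<forall>\<^sub>F w in nhds x. \<forall>i\<in>{1..n}. \<bar>h i p w - h i p x\<bar> < \<eta>"
  proof (rule eventually_ball_finite, simp, rule ballI)
    fix i assume "i \<in> {1..n}"
    then have "(h i p \<longlongrightarrow> h i p x) (nhds x)"
      using cont by (simp add: isCont_def tendsto_at_iff_tendsto_nhds)
    from tendstoD[OF this \<open>\<eta> > 0\<close>]
    show "\<forall>\<^sub>F w in nhds x. \<bar>h i p w - h i p x\<bar> < \<eta>" by (simp add: dist_real_def)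
  qed
  then show ?thesis
  proof eventually_elim
    case (elim w)
    show ?case
    proof (rule residual_le)
      show "0 \<le> residual h m n p x + \<eta>" using residual_nonneg[of h m n p x] \<open>\<eta> > 0\<close> by simp
      show "h i p w \<le> residual h m n p x + \<eta>" if "i \<in> {1..m}" for i
        using elim residual_ge_ineq[OF that, of h p x n] that mn by force
      show "\<bar>h i p w\<bar> \<le> residual h m n p x + \<eta>" if "i \<in> {m+1..n}" for i
      proof -
        have "\<bar>h i p w - h i p x\<bar> < \<eta>" using elim that by auto
        then show ?thesis using residual_ge_eq[OF that, of h p x] by linarith
      qed
    qed
  qed
qed

lemma closed_feas_map:
  assumes "\<And>i. i \<in> {1..n} \<Longrightarrow> continuous_on UNIV (h i p)" and "m \<le> n"
  shows "closed (feas_map h m n p)"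
proof -
  have "feas_map h m n p = (\<Inter>i\<in>{1..m}. {x. h i p x \<le> 0}) \<inter> (\<Inter>i\<in>{m+1..n}. {x. h i p x = 0})"
    by (auto simp: feas_map_def)
  also have "closed \<dots>"
    using assms by (intro closed_Int closed_INT ballI closed_Collect_le closed_Collect_eq continuous_on_const) auto
  finally show ?thesis .
qed

lemma eventually_residual_along_le:
  fixes h :: "nat \<Rightarrow> 'g \<Rightarrow> 'h::real_inner \<Rightarrow> real" and gradx :: "nat \<Rightarrow> 'g \<Rightarrow> 'h \<Rightarrow> 'h"
  assumes mn: "m \<le> n"
    and grad: "\<And>i. i \<in> {1..n} \<Longrightarrow> (h i p has_derivative (\<lambda>u. gradx i p x \<bullet> u)) (at x)"
    and xF: "x \<in> feas_map h m n p" and s: "s \<ge> 0" and e: "e > 0"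
    and act: "\<And>i. i \<in> {1..m} \<Longrightarrow> h i p x = 0 \<Longrightarrow> gradx i p x \<bullet> d \<le> s"
    and eq: "\<And>i. i \<in> {m+1..n} \<Longrightarrow> \<bar>gradx i p x \<bullet> d\<bar> \<le> s"
  shows "\<forall>\<^sub>F t in at_right 0. residual h m n p (x + t *\<^sub>R d) \<le> t * (s + e)"
proof -
  have "\<forall>\<^sub>F t in at_right 0. \<forall>i\<in>{1..n}.
      h i p (x + t *\<^sub>R d) \<le> h i p x + t * (gradx i p x \<bullet> d + e) \<and>
      - h i p (x + t *\<^sub>R d) \<le> - h i p x + t * (- (gradx i p x \<bullet> d) + e) \<and>
      (h i p x < 0 \<longrightarrow> h i p (x + t *\<^sub>R d) < 0)"
  proof (rule eventually_ball_finite, simp, rule ballI, intro eventually_conj)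
    fix i assume i: "i \<in> {1..n}"
    show "\<forall>\<^sub>F t in at_right 0. h i p (x + t *\<^sub>R d) \<le> h i p x + t * (gradx i p x \<bullet> d + e)"
      using has_derivative_right_upper_bound_along[OF grad[OF i] e] by simp
    show "\<forall>\<^sub>F t in at_right 0. - h i p (x + t *\<^sub>R d) \<le> - h i p x + t * (- (gradx i p x \<bullet> d) + e)"
      using has_derivative_right_upper_bound_along[OF has_derivative_minus[OF grad[OF i]] e] by simp
    have "((\<lambda>t. h i p (x + t *\<^sub>R d)) \<longlongrightarrow> h i p x) (at_right 0)"
      using has_derivative_continuous[OF grad[OF i]]
      by (intro isCont_tendsto_compose[where g="h i p"]) (auto intro!: tendsto_eq_intros)
    then show "\<forall>\<^sub>F t in at_right 0. h i p x < 0 \<longrightarrow> h i p (x + t *\<^sub>R d) < 0"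
      by (cases "h i p x < 0") (auto dest: order_tendstoD(2))
  qed
  with eventually_at_right_less[of 0] show ?thesis
  proof eventually_elim
    case (elim t)
    then have T: "0 \<le> t * (s + e)" using s e by simp
    show ?case
    proof (rule residual_le[OF T])
      fix i assume i: "i \<in> {1..m}"
      then have i': "i \<in> {1..n}" and "h i p x \<le> 0" using mn xF by (auto simp: feas_map_def)
      show "h i p (x + t *\<^sub>R d) \<le> t * (s + e)"
      proof (cases "h i p x = 0")
        case True
        then have "t * (gradx i p x \<bullet> d + e) \<le> t * (s + e)"
          using act[OF i] elim(1) by (intro mult_left_mono) auto
        then show ?thesis using bspec[OF elim(2) i'] True by simp
      next
        case False
        then show ?thesis using bspec[OF elim(2) i'] \<open>h i p x \<le> 0\<close> T by force
      qed
    next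
      fix i assume i: "i \<in> {m+1..n}"
      then have i': "i \<in> {1..n}" and "h i p x = 0" using xF by (auto simp: feas_map_def)
      moreover have "t * (gradx i p x \<bullet> d + e) \<le> t * (s + e)"
        and "t * (- (gradx i p x \<bullet> d) + e) \<le> t * (s + e)"
        using eq[OF i] elim(1) by (auto intro!: mult_left_mono)
      ultimately show "\<bar>h i p (x + t *\<^sub>R d)\<bar> \<le> t * (s + e)"
        using bspec[OF elim(2) i'] by (auto simp: abs_le_iff)
    qed
  qed
qed

lemma local_exact_penalty_no_descent:
  fixes h :: "nat \<Rightarrow> 'g \<Rightarrow> 'h::real_inner \<Rightarrow> real" and gradx :: "nat \<Rightarrow> 'g \<Rightarrow> 'h \<Rightarrow> 'h"
  assumes mn: "m \<le> n"
    and grad: "\<And>i. i \<in> {1..n} \<Longrightarrow> (h i p has_derivative (\<lambda>u. gradx i p x \<bullet> u)) (at x)"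
    and xF: "x \<in> feas_map h m n p" and xv: "x \<noteq> v" and M: "M \<ge> 0" and \<rho>: "\<rho> > 0"
    and penalty: "\<And>y. y \<in> ball x \<rho> \<Longrightarrow> norm (x - v) \<le> norm (y - v) + M * residual h m n p y"
    and s: "s \<ge> 0"
    and act: "\<And>i. i \<in> {1..m} \<Longrightarrow> h i p x = 0 \<Longrightarrow> gradx i p x \<bullet> d \<le> s"
    and eq: "\<And>i. i \<in> {m+1..n} \<Longrightarrow> \<bar>gradx i p x \<bullet> d\<bar> \<le> s"
  shows "0 \<le> sgn (x - v) \<bullet> d + M * s"
proof (rule ccontr)
  define g where "g = sgn (x - v)"
  assume "\<not> 0 \<le> sgn (x - v) \<bullet> d + M * s"
  then have descent: "g \<bullet> d + M * s < 0" by (simp add: g_def)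
  define e where "e = - (g \<bullet> d + M * s) / (2 * (1 + M))"
  have e: "e > 0" and e_eq: "g \<bullet> d + M * s + (1 + M) * e = (g \<bullet> d + M * s) / 2"
    using descent M by (auto simp: e_def field_simps)
  have "((\<lambda>t. x + t *\<^sub>R d) \<longlongrightarrow> x) (at_right 0)"
    by (auto intro!: tendsto_eq_intros)
  then have "\<forall>\<^sub>F t in at_right 0. x + t *\<^sub>R d \<in> ball x \<rho>"
    using \<rho> by (auto simp: dist_commute dest: tendstoD)
  moreover have "\<forall>\<^sub>F t in at_right 0. norm ((x - v) + t *\<^sub>R d) \<le> norm (x - v) + t * (d \<bullet> g + e)"
    using has_derivative_right_upper_bound_along[OF has_derivative_norm e, of "x - v" d] xv
    by (simp add: g_def)
  moreover have "\<forall>\<^sub>F t in at_right 0. residual h m n p (x + t *\<^sub>R d) \<le> t * (s + e)"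
    using mn grad xF s e act eq by (rule eventually_residual_along_le)
  moreover note eventually_at_right_less[of 0]
  ultimately have "\<forall>\<^sub>F t in at_right 0. x + t *\<^sub>R d \<in> ball x \<rho> \<and>
      norm ((x - v) + t *\<^sub>R d) \<le> norm (x - v) + t * (d \<bullet> g + e) \<and>
      residual h m n p (x + t *\<^sub>R d) \<le> t * (s + e) \<and> t > 0"
    by eventually_elim blast
  then obtain t where t: "x + t *\<^sub>R d \<in> ball x \<rho>" "t > 0"
    and norm_step: "norm ((x - v) + t *\<^sub>R d) \<le> norm (x - v) + t * (d \<bullet> g + e)"
    and res: "residual h m n p (x + t *\<^sub>R d) \<le> t * (s + e)"
    using eventually_happens'[OF trivial_limit_at_right_real] by blast
  have "norm (x - v) \<le> norm (x + t *\<^sub>R d - v) + M * residual h m n p (x + t *\<^sub>R d)"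
    by (rule penalty[OF t(1)])
  also have "\<dots> \<le> norm (x - v) + t * (g \<bullet> d + e) + M * (t * (s + e))"
    using norm_step mult_left_mono[OF res M] by (simp add: algebra_simps inner_commute)
  also have "\<dots> = norm (x - v) + t * (g \<bullet> d + M * s + (1 + M) * e)"
    by (simp add: algebra_simps)
  also have "\<dots> = norm (x - v) + t * ((g \<bullet> d + M * s) / 2)"
    by (simp only: e_eq)
  finally show False using mult_pos_neg[OF t(2) descent] by simp
qed

definition admissible_multipliers ::
  "(nat \<Rightarrow> 'g \<Rightarrow> 'h \<Rightarrow> real) \<Rightarrow> nat \<Rightarrow> nat \<Rightarrow> 'g \<Rightarrow> 'h \<Rightarrow> real \<Rightarrow> (nat \<Rightarrow> real) set" where
  "admissible_multipliers h m n p x r =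
     {lam. (\<forall>i. i \<notin> {1..n} \<longrightarrow> lam i = 0) \<and>
           (\<forall>i\<in>{1..m}. 0 \<le> lam i \<and> lam i * h i p x = 0) \<and> (\<Sum>i=1..n. \<bar>lam i\<bar>) \<le> r}"

lemma LagrM_iff:
  "lam \<in> LagrM M h gradx m n v p x \<longleftrightarrow>
     lam \<in> admissible_multipliers h m n p x M \<and>
     (1 / norm (x - v)) *\<^sub>R (x - v) + (\<Sum>i=1..n. lam i *\<^sub>R gradx i p x) = 0"
  by (auto simp: LagrM_def Lagr_def admissible_multipliers_def)

lemma admissible_multipliers_scale:
  assumes "lam \<in> admissible_multipliers h m n p x 1" "M \<ge> 0"
  shows "(\<lambda>i. M * lam i) \<in> admissible_multipliers h m n p x M"
proof -
  have "(\<Sum>i=1..n. \<bar>M * lam i\<bar>) = M * (\<Sum>i=1..n. \<bar>lam i\<bar>)"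
    using assms(2) by (simp add: abs_mult sum_distrib_left)
  also have "\<dots> \<le> M" using assms by (simp add: admissible_multipliers_def mult_left_le)
  finally show ?thesis using assms by (auto simp: admissible_multipliers_def)
qed

lemma admissible_multipliers_single:
  assumes "i \<in> {1..n}" "\<bar>a\<bar> \<le> r" "i \<in> {1..m} \<Longrightarrow> 0 \<le> a \<and> h i p x = 0"
  shows "(\<lambda>j. if j = i then a else 0) \<in> admissible_multipliers h m n p x r"
proof -
  have "(\<Sum>j=1..n. \<bar>if j = i then a else 0\<bar>) = (\<Sum>j=1..n. if j = i then \<bar>a\<bar> else 0)"
    by (rule sum.cong) auto
  also have "\<dots> = \<bar>a\<bar>" using assms(1) by simp
  finally show ?thesis using assms by (auto simp: admissible_multipliers_def)
qed

lemma convex_image_admissible_multipliers: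
  "convex ((\<lambda>lam. \<Sum>i=1..n. lam i *\<^sub>R G i) ` admissible_multipliers h m n p x r)"
proof (rule convexI)
  fix u v :: real and k1 k2
  assume "k1 \<in> (\<lambda>lam. \<Sum>i=1..n. lam i *\<^sub>R G i) ` admissible_multipliers h m n p x r"
    and "k2 \<in> (\<lambda>lam. \<Sum>i=1..n. lam i *\<^sub>R G i) ` admissible_multipliers h m n p x r"
    and uv: "0 \<le> u" "0 \<le> v" "u + v = 1"
  then obtain l1 l2 where l1: "l1 \<in> admissible_multipliers h m n p x r" "k1 = (\<Sum>i=1..n. l1 i *\<^sub>R G i)"
    and l2: "l2 \<in> admissible_multipliers h m n p x r" "k2 = (\<Sum>i=1..n. l2 i *\<^sub>R G i)"
    by blast
  define l where "l i = u * l1 i + v * l2 i" for i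
  have "(\<Sum>i=1..n. \<bar>l i\<bar>) \<le> (\<Sum>i=1..n. u * \<bar>l1 i\<bar> + v * \<bar>l2 i\<bar>)"
    unfolding l_def using uv by (intro sum_mono) (metis abs_mult abs_of_nonneg abs_triangle_ineq)
  also have "\<dots> = u * (\<Sum>i=1..n. \<bar>l1 i\<bar>) + v * (\<Sum>i=1..n. \<bar>l2 i\<bar>)"
    by (simp add: sum.distrib sum_distrib_left)
  also have "\<dots> \<le> u * r + v * r"
    using l1(1) l2(1) uv unfolding admissible_multipliers_def by (intro add_mono mult_left_mono) auto
  also have "\<dots> = r" using uv by (simp flip: distrib_right)
  finally have "l \<in> admissible_multipliers h m n p x r"
    using l1(1) l2(1) uv by (force simp: admissible_multipliers_def l_def)
  moreover have "u *\<^sub>R k1 + v *\<^sub>R k2 = (\<Sum>i=1..n. l i *\<^sub>R G i)"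
    unfolding l1(2) l2(2) l_def by (simp add: scaleR_add_left sum.distrib scaleR_sum_right)
  ultimately show "u *\<^sub>R k1 + v *\<^sub>R k2 \<in> (\<lambda>lam. \<Sum>i=1..n. lam i *\<^sub>R G i) ` admissible_multipliers h m n p x r"
    by blast
qed

lemma convex_hull_active_gradients_subset:
  fixes G :: "nat \<Rightarrow> 'a::real_vector"
  assumes mn: "m \<le> n"
  shows "convex hull (insert 0 (G ` {i \<in> {1..m}. h i p x = 0} \<union> G ` {m+1..n} \<union> (\<lambda>i. - G i) ` {m+1..n}))
    \<subseteq> (\<lambda>lam. \<Sum>i=1..n. lam i *\<^sub>R G i) ` admissible_multipliers h m n p x 1"
    (is "convex hull ?Q \<subseteq> ?L ` ?A")
proof (rule hull_minimal)
  have single: "a *\<^sub>R G i \<in> ?L ` ?A"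
    if "i \<in> {1..n}" "\<bar>a\<bar> \<le> 1" "i \<in> {1..m} \<Longrightarrow> 0 \<le> a \<and> h i p x = 0" for i a
  proof -
    have "?L (\<lambda>j. if j = i then a else 0) = (\<Sum>j=1..n. if j = i then a *\<^sub>R G j else 0)"
      by (intro sum.cong) auto
    then have "?L (\<lambda>j. if j = i then a else 0) = a *\<^sub>R G i" using that(1) by simp
    with imageI[OF admissible_multipliers_single[of i n a 1 m h p x], of ?L] that show ?thesis
      by simp
  qed
  have "(\<lambda>_. 0) \<in> ?A" by (simp add: admissible_multipliers_def)
  then have "0 \<in> ?L ` ?A" by force
  with single[of _ 1] single[of _ "-1"] mn show "?Q \<subseteq> ?L ` ?A" by auto
qed (rule convex_image_admissible_multipliers)

lemma min_norm_point_convex_hull_affinity: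
  fixes Q :: "'a::real_inner set"
  assumes "finite Q" "Q \<noteq> {}"
  obtains k where "k \<in> convex hull Q" "\<And>q. q \<in> Q \<Longrightarrow> (g + c *\<^sub>R k) \<bullet> (c *\<^sub>R k) \<le> (g + c *\<^sub>R k) \<bullet> (c *\<^sub>R q)"
proof -
  define S where "S = (\<lambda>k. g + c *\<^sub>R k) ` (convex hull Q)"
  have "compact S" "convex S" "S \<noteq> {}"
    using assms unfolding S_def
    by (auto intro: compact_affinity finite_imp_compact_convex_hull convex_affinity convex_convex_hull)
  then obtain w where "w \<in> S" and w_min: "\<And>z. z \<in> S \<Longrightarrow> norm w \<le> norm z"
    using continuous_attains_inf[OF _ _ continuous_on_norm_id, of S] by blast
  then obtain k where k: "k \<in> convex hull Q" "w = g + c *\<^sub>R k" by (auto simp: S_def)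
  have "w \<bullet> w \<le> w \<bullet> (g + c *\<^sub>R q)" if "q \<in> Q" for q
  proof -
    have "g + c *\<^sub>R q \<in> S" unfolding S_def by (intro imageI hull_inc that)
    then show ?thesis
      using any_closest_point_dot[of S w "g + c *\<^sub>R q" 0] \<open>compact S\<close> \<open>convex S\<close> \<open>w \<in> S\<close> w_min
      by (simp add: inner_diff_right compact_imp_closed)
  qed
  with k show thesis by (intro that[of k]) (simp_all add: inner_add_right)
qed

lemma LagrM_nonempty_if_local_exact_penalty:
  fixes h :: "nat \<Rightarrow> 'g \<Rightarrow> 'h::real_inner \<Rightarrow> real" and gradx :: "nat \<Rightarrow> 'g \<Rightarrow> 'h \<Rightarrow> 'h"
  assumes mn: "m \<le> n"
    and grad: "\<And>i. i \<in> {1..n} \<Longrightarrow> (h i p has_derivative (\<lambda>u. gradx i p x \<bullet> u)) (at x)"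
    and xF: "x \<in> feas_map h m n p" and xv: "x \<noteq> v" and M: "M > 0" and \<rho>: "\<rho> > 0"
    and penalty: "\<And>y. y \<in> ball x \<rho> \<Longrightarrow> norm (x - v) \<le> norm (y - v) + M * residual h m n p y"
  shows "LagrM M h gradx m n v p x \<noteq> {}"
proof -
  define g where "g = sgn (x - v)"
  define G where "G i = gradx i p x" for i
  define Q where "Q = insert 0 (G ` {i \<in> {1..m}. h i p x = 0} \<union> G ` {m+1..n} \<union> (\<lambda>i. - G i) ` {m+1..n})"
  have "finite Q" "Q \<noteq> {}" by (simp_all add: Q_def)
  then obtain k where k: "k \<in> convex hull Q"
    and k_min: "\<And>q. q \<in> Q \<Longrightarrow> (g + M *\<^sub>R k) \<bullet> (M *\<^sub>R k) \<le> (g + M *\<^sub>R k) \<bullet> (M *\<^sub>R q)"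
    by (rule min_norm_point_convex_hull_affinity[where g=g and c=M]) blast
  define w where "w = g + M *\<^sub>R k"
  show ?thesis
  proof (cases "w = 0")
    case True
    obtain lam where lam: "lam \<in> admissible_multipliers h m n p x 1" "k = (\<Sum>i=1..n. lam i *\<^sub>R G i)"
      using convex_hull_active_gradients_subset[OF mn, of G h p x] k unfolding Q_def by blast
    have "g + (\<Sum>i=1..n. (M * lam i) *\<^sub>R gradx i p x) = w"
      by (simp add: w_def lam(2) G_def scaleR_sum_right)
    then have "(\<lambda>i. M * lam i) \<in> LagrM M h gradx m n v p x"
      using True admissible_multipliers_scale[OF lam(1)] M
      by (simp add: LagrM_iff g_def sgn_div_norm inverse_eq_divide)
    then show ?thesis by blast
  next
    case False
    \<comment> \<open>Then -w is a first-order descent direction of the penalty at x.\<close>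
    define s where "s = - (k \<bullet> w)"
    have q_le: "q \<bullet> (- w) \<le> s" if "q \<in> Q" for q
      using k_min[OF that] M by (simp add: s_def w_def[symmetric] inner_commute)
    have "0 \<le> g \<bullet> (- w) + M * s"
      unfolding g_def
    proof (rule local_exact_penalty_no_descent[where h=h and gradx=gradx and p=p,
          OF mn grad xF xv less_imp_le[OF M] \<rho> penalty])
      show "0 \<le> s" using q_le[of 0] by (simp add: Q_def)
      show "gradx i p x \<bullet> - w \<le> s" if "i \<in> {1..m}" "h i p x = 0" for i
        using q_le[of "G i"] that by (simp add: Q_def G_def)
      show "\<bar>gradx i p x \<bullet> - w\<bar> \<le> s" if "i \<in> {m+1..n}" for i
        using q_le[of "G i"] q_le[of "- G i"] that by (simp add: Q_def G_def abs_le_iff)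
    qed
    moreover have "w \<bullet> w = g \<bullet> w + M * (k \<bullet> w)"
      by (subst (1) w_def) (simp add: inner_add_left)
    ultimately show ?thesis using False inner_gt_zero_iff[of w] by (simp add: s_def)
  qed
qed

lemma lsc_rel_eventually_infdist_less:
  fixes F :: "'g::metric_space \<Rightarrow> 'h::metric_space set"
  assumes lsc: "lsc_rel F P p0 x0" and pk: "pk \<longlonglongrightarrow> p0" "\<And>k. pk k \<in> P"
    and vk: "vk \<longlonglongrightarrow> x0" and r: "r > 0"
  shows "\<forall>\<^sub>F k in sequentially. infdist (vk k) (F (pk k)) < r"
proof -
  obtain U where U: "open U" "p0 \<in> U" "\<And>p. p \<in> U \<inter> P \<Longrightarrow> F p \<inter> ball x0 (r/2) \<noteq> {}"
    using lsc r unfolding lsc_rel_def by (metis centre_in_ball half_gt_zero open_ball)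
  have "\<forall>\<^sub>F k in sequentially. pk k \<in> U" using pk(1) U(1,2) by (rule topological_tendstoD)
  moreover have "\<forall>\<^sub>F k in sequentially. dist (vk k) x0 < r/2" using vk r by (intro tendstoD) auto
  ultimately show ?thesis
  proof eventually_elim
    case (elim k)
    then obtain z where "z \<in> F (pk k)" "dist x0 z < r/2" using U(3)[of "pk k"] pk(2) by auto
    then have "infdist (vk k) (F (pk k)) \<le> dist (vk k) x0 + dist x0 z"
      using infdist_le dist_triangle order_trans by metis
    then show ?case using elim \<open>dist x0 z < r/2\<close> by linarith
  qed
qed

lemma lsc_rel_eventually_proj_set_near:
  fixes F :: "'g::metric_space \<Rightarrow> 'h::metric_space set"
  assumes lsc: "lsc_rel F P p0 x0" and pk: "pk \<longlonglongrightarrow> p0" "\<And>k. pk k \<in> P"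
    and vk: "vk \<longlonglongrightarrow> x0" and r: "r > 0"
  shows "\<forall>\<^sub>F k in sequentially. \<forall>x \<in> proj_set (F (pk k)) (vk k). dist x x0 < r"
  using lsc_rel_eventually_infdist_less[OF lsc pk vk half_gt_zero[OF r]] tendstoD[OF vk half_gt_zero[OF r]]
proof eventually_elim
  case (elim k)
  show ?case
  proof
    fix x assume "x \<in> proj_set (F (pk k)) (vk k)"
    then have "dist x (vk k) = infdist (vk k) (F (pk k))" by (simp add: proj_set_def)
    then show "dist x x0 < r" using elim dist_triangle[of x x0 "vk k"] by linarith
  qed
qed

lemma proj_set_norm_le:
  assumes "x \<in> proj_set S v" "infdist y S \<le> r"
  shows "norm (x - v) \<le> norm (y - v) + r"
proof -
  have "norm (x - v) = infdist v S" using assms(1) by (simp add: proj_set_def dist_norm)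
  also have "\<dots> \<le> infdist y S + dist v y" by (rule infdist_triangle)
  finally show ?thesis using assms(2) by (simp add: dist_norm norm_minus_commute)
qed

definition uniform_multiplier_bound ::
  "real \<Rightarrow> (nat \<Rightarrow> 'g::real_normed_vector \<Rightarrow> 'h::real_normed_vector \<Rightarrow> real) \<Rightarrow> (nat \<Rightarrow> 'g \<Rightarrow> 'h \<Rightarrow> 'h)
    \<Rightarrow> nat \<Rightarrow> nat \<Rightarrow> 'g \<Rightarrow> 'h \<Rightarrow> bool" where
  "uniform_multiplier_bound M h gradx m n p0 x0 \<longleftrightarrow>
     (\<forall>pk vk. pk \<longlonglongrightarrow> p0 \<and> (\<forall>k. pk k \<in> dom_map (feas_map h m n)) \<and>
        vk \<longlonglongrightarrow> x0 \<and> (\<forall>k. vk k \<notin> feas_map h m n (pk k)) \<longrightarrow>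
        (\<forall>\<^sub>F k in sequentially.
           \<forall>xk \<in> proj_set (feas_map h m n (pk k)) (vk k). LagrM M h gradx m n (vk k) (pk k) xk \<noteq> {}))"

lemma uniform_multiplier_bound_if_R_regular_rel:
  fixes h :: "nat \<Rightarrow> 'g::real_normed_vector \<Rightarrow> 'h::real_inner \<Rightarrow> real"
  assumes mn: "m \<le> n"
    and grad: "\<And>i p x. i \<in> {1..n} \<Longrightarrow> (h i p has_derivative (\<lambda>u. gradx i p x \<bullet> u)) (at x)"
    and lsc: "lsc_rel (feas_map h m n) (dom_map (feas_map h m n)) p0 x0"
    and reg: "R_regular_rel h m n (dom_map (feas_map h m n)) p0 x0"
  obtains M where "M > 0" "uniform_multiplier_bound M h gradx m n p0 x0"
proof -
  define F where "F = feas_map h m n"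
  obtain M U V where M: "M > 0" and U: "open U" "p0 \<in> U" and V: "open V" "x0 \<in> V"
    and bound: "\<And>x p. x \<in> V \<Longrightarrow> p \<in> U \<inter> dom_map F \<Longrightarrow> infdist x (F p) \<le> M * residual h m n p x"
    using reg unfolding R_regular_rel_def F_def by blast
  obtain r where r: "r > 0" "ball x0 r \<subseteq> V" using V open_contains_ball by blast
  have "uniform_multiplier_bound M h gradx m n p0 x0"
    unfolding uniform_multiplier_bound_def F_def[symmetric]
  proof (intro allI impI, elim conjE)
    fix pk vk
    assume pk: "pk \<longlonglongrightarrow> p0" "\<forall>k. pk k \<in> dom_map F" and vk: "vk \<longlonglongrightarrow> x0"
      and vF: "\<forall>k. vk k \<notin> F (pk k)"
    have "\<forall>\<^sub>F k in sequentially. pk k \<in> U" using pk(1) U by (rule topological_tendstoD)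
    moreover have "\<forall>\<^sub>F k in sequentially. \<forall>x \<in> proj_set (F (pk k)) (vk k). dist x x0 < r/2"
      using pk vk r unfolding F_def
      by (intro lsc_rel_eventually_proj_set_near[OF lsc]) auto
    ultimately show "\<forall>\<^sub>F k in sequentially.
        \<forall>xk \<in> proj_set (F (pk k)) (vk k). LagrM M h gradx m n (vk k) (pk k) xk \<noteq> {}"
    proof eventually_elim
      case (elim k)
      show ?case
      proof
        fix x assume x: "x \<in> proj_set (F (pk k)) (vk k)"
        then have xF: "x \<in> F (pk k)" by (simp add: proj_set_def)
        show "LagrM M h gradx m n (vk k) (pk k) x \<noteq> {}"
        proof (rule LagrM_nonempty_if_local_exact_penalty[where h=h and gradx=gradx and p="pk k",
              OF mn grad xF[unfolded F_def] _ M half_gt_zero[OF r(1)]])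
          show "x \<noteq> vk k" using xF vF by auto
          fix y assume "y \<in> ball x (r/2)"
          moreover have "dist x x0 < r/2" using elim x by blast
          ultimately have "y \<in> V" using r(2) dist_triangle[of x0 y x] by (auto simp: dist_commute)
          then show "norm (x - vk k) \<le> norm (y - vk k) + M * residual h m n (pk k) y"
            using bound elim pk(2) by (intro proj_set_norm_le[OF x[unfolded F_def]]) (auto simp: F_def)
        qed
      qed
    qed
  qed
  with M show thesis by (rule that)
qed

lemma not_R_regular_rel_sequences:
  assumes "\<not> R_regular_rel h m n P p0 x0"
  obtains pk xk where "\<And>k. dist (pk k) p0 \<le> 1 / real (Suc k)" "\<And>k. dist (xk k) x0 \<le> 1 / real (Suc k)"
    "\<And>k. pk k \<in> P"
    "\<And>k. real (Suc k) * residual h m n (pk k) (xk k) < infdist (xk k) (feas_map h m n (pk k))"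
proof -
  have "\<exists>p x. dist p p0 \<le> 1 / real (Suc k) \<and> dist x x0 \<le> 1 / real (Suc k) \<and> p \<in> P \<and>
      real (Suc k) * residual h m n p x < infdist x (feas_map h m n p)" for k
  proof (rule ccontr)
    define r where "r = 1 / real (Suc k)"
    assume none: "\<not> ?thesis"
    have bound: "infdist x (feas_map h m n p) \<le> real (Suc k) * residual h m n p x"
      if "x \<in> ball x0 r" "p \<in> ball p0 r \<inter> P" for x p
    proof -
      from that have "dist p p0 \<le> r" "dist x x0 \<le> r" "p \<in> P" by (auto simp: dist_commute)
      with none show ?thesis unfolding r_def by (meson not_less)
    qed
    have "R_regular_rel h m n P p0 x0"
      unfolding R_regular_rel_def
      by (intro exI[of _ "real (Suc k)"] conjI exI[of _ "ball p0 r"] exI[of _ "ball x0 r"] ballI bound)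
         (simp_all add: r_def)
    with assms show False ..
  qed
  then show thesis using that by metis
qed

lemma exists_near_point_with_nearest_point:
  fixes h :: "nat \<Rightarrow> 'g \<Rightarrow> 'h::{real_inner, complete_space} \<Rightarrow> real"
  assumes mn: "m \<le> n" and cont: "\<And>i. i \<in> {1..n} \<Longrightarrow> continuous_on UNIV (h i p)"
    and ne: "feas_map h m n p \<noteq> {}" and e: "e > 0"
  obtains w y where "dist w x < e" "residual h m n p w \<le> residual h m n p x + e"
    "y \<in> proj_set (feas_map h m n p) w"
proof -
  have "\<forall>\<^sub>F w in nhds x. residual h m n p w \<le> residual h m n p x + e"
    using cont e by (intro eventually_residual_le[OF mn]) (simp add: continuous_on_eq_continuous_at)
  then obtain \<delta> where \<delta>: "\<delta> > 0" "\<And>w. dist w x < \<delta> \<Longrightarrow> residual h m n p w \<le> residual h m n p x + e"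
    unfolding eventually_nhds_metric by blast
  obtain w y where "dist w x < min \<delta> e" "y \<in> feas_map h m n p" "dist y w = infdist w (feas_map h m n p)"
    using dense_points_with_nearest_point[OF closed_feas_map[where h=h and p=p, OF cont mn] ne, of "min \<delta> e" x] \<delta>(1) e
    by auto
  with \<delta>(2) show thesis by (intro that[of w y]) (auto simp: proj_set_def)
qed

lemma admissible_multiplier_times_increment_le:
  assumes lam: "lam \<in> admissible_multipliers h m n p y r" and yF: "y \<in> feas_map h m n p"
    and i: "i \<in> {1..n}"
  shows "lam i * (h i p w - h i p y) \<le> \<bar>lam i\<bar> * residual h m n p w"
proof (cases "i \<le> m")
  case True
  with i have "0 \<le> lam i" "lam i * h i p y = 0" "h i p w \<le> residual h m n p w"
    using lam residual_ge_ineq[of i m h p w n] by (auto simp: admissible_multipliers_def)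
  then have "lam i * h i p w \<le> lam i * residual h m n p w" by (intro mult_left_mono)
  with \<open>lam i * h i p y = 0\<close> \<open>0 \<le> lam i\<close> show ?thesis by (auto simp: right_diff_distrib)
next
  case False
  with i have "h i p y = 0" "\<bar>h i p w\<bar> \<le> residual h m n p w"
    using yF residual_ge_eq[of i m n h p w] by (auto simp: feas_map_def)
  then have "\<bar>lam i\<bar> * \<bar>h i p w\<bar> \<le> \<bar>lam i\<bar> * residual h m n p w" by (intro mult_left_mono) simp_all
  then show ?thesis
    using \<open>h i p y = 0\<close> by (metis abs_ge_self abs_mult diff_zero order_trans)
qed

lemma dist_le_residual_if_LagrM:
  fixes h :: "nat \<Rightarrow> 'g \<Rightarrow> 'h::real_inner \<Rightarrow> real" and gradx :: "nat \<Rightarrow> 'g \<Rightarrow> 'h \<Rightarrow> 'h"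
  assumes grad: "\<And>i z. i \<in> {1..n} \<Longrightarrow> (h i p has_derivative (\<lambda>u. gradx i p z \<bullet> u)) (at z)"
    and yF: "y \<in> feas_map h m n p" and yw: "y \<noteq> w" and M: "M > 0"
    and lam: "lam \<in> LagrM M h gradx m n w p y"
    and osc: "\<And>i \<tau>. i \<in> {1..n} \<Longrightarrow> \<tau> \<in> {0..1} \<Longrightarrow>
      norm (gradx i p (y + \<tau> *\<^sub>R (w - y)) - gradx i p y) \<le> 1 / (2 * M)"
  shows "dist y w \<le> 2 * M * residual h m n p w"
proof -
  define D where "D = dist y w"
  define R where "R = residual h m n p w"
  have D: "D > 0" using yw by (simp add: D_def)
  have lam_adm: "lam \<in> admissible_multipliers h m n p y M"
    and stat: "(1 / D) *\<^sub>R (y - w) + (\<Sum>i=1..n. lam i *\<^sub>R gradx i p y) = 0"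
    using lam by (simp_all add: LagrM_iff D_def dist_norm)
  have "(1 / D) * ((y - w) \<bullet> (w - y)) + (\<Sum>i=1..n. lam i * (gradx i p y \<bullet> (w - y))) = 0"
    using arg_cong[OF stat, of "\<lambda>z. z \<bullet> (w - y)"] by (simp add: inner_add_left inner_sum_left)
  moreover have "(y - w) \<bullet> (w - y) = - ((y - w) \<bullet> (y - w))"
    using inner_minus_right[of "y - w" "y - w"] by simp
  then have "(y - w) \<bullet> (w - y) = - (D * D)"
    by (simp add: D_def dist_norm flip: power2_norm_eq_inner power2_eq_square)
  ultimately have sum_eq: "(\<Sum>i=1..n. lam i * (gradx i p y \<bullet> (w - y))) = D"
    using D by simp
  have term_le: "lam i * (gradx i p y \<bullet> (w - y)) \<le> \<bar>lam i\<bar> * (R + D / (2 * M))" if i: "i \<in> {1..n}" for i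
  proof -
    define e where "e = h i p w - h i p y - gradx i p y \<bullet> (w - y)"
    have "\<bar>e\<bar> \<le> norm (w - y) * (1 / (2 * M))"
      unfolding e_def by (rule has_derivative_inner_linearization_bound[OF grad[OF i] osc[OF i]])
    then have "\<bar>lam i\<bar> * \<bar>e\<bar> \<le> \<bar>lam i\<bar> * (D / (2 * M))"
      by (intro mult_left_mono) (simp_all add: D_def dist_norm norm_minus_commute)
    then have "- (lam i * e) \<le> \<bar>lam i\<bar> * (D / (2 * M))"
      by (metis abs_ge_minus_self abs_mult order_trans)
    moreover have "lam i * (h i p w - h i p y) \<le> \<bar>lam i\<bar> * R"
      unfolding R_def by (rule admissible_multiplier_times_increment_le[OF lam_adm yF i])
    ultimately show ?thesis by (simp add: e_def algebra_simps)
  qed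
  have "D = (\<Sum>i=1..n. lam i * (gradx i p y \<bullet> (w - y)))" using sum_eq by simp
  also have "\<dots> \<le> (\<Sum>i=1..n. \<bar>lam i\<bar> * (R + D / (2 * M)))"
    by (rule sum_mono) (rule term_le)
  also have "\<dots> = (\<Sum>i=1..n. \<bar>lam i\<bar>) * (R + D / (2 * M))" by (simp add: sum_distrib_right)
  also have "\<dots> \<le> M * (R + D / (2 * M))"
    using lam_adm residual_nonneg[of h m n p w] D M
    by (intro mult_right_mono) (auto simp: admissible_multipliers_def R_def)
  also have "\<dots> = M * R + D / 2" using M by (simp add: field_simps)
  finally show ?thesis by (simp add: D_def R_def)
qed

lemma segment_oscillation_less:
  fixes f :: "'a::real_normed_vector \<Rightarrow> 'b::real_normed_vector"
  assumes near: "\<And>z. dist z x0 < \<delta> \<Longrightarrow> dist (f z) c < e"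
    and y: "dist y x0 < \<delta>" and w: "dist w x0 < \<delta>" and \<tau>: "\<tau> \<in> {0..1}"
  shows "norm (f (y + \<tau> *\<^sub>R (w - y)) - f y) < 2 * e"
proof -
  have "(1 - \<tau>) *\<^sub>R y + \<tau> *\<^sub>R w \<in> ball x0 \<delta>"
    using \<tau> y w by (intro convexD_alt[OF convex_ball]) (auto simp: dist_commute)
  moreover have "y + \<tau> *\<^sub>R (w - y) = (1 - \<tau>) *\<^sub>R y + \<tau> *\<^sub>R w" by (simp add: algebra_simps)
  ultimately have "dist (f (y + \<tau> *\<^sub>R (w - y))) c < e" by (intro near) (simp add: dist_commute)
  with near[OF y] show ?thesis
    using dist_triangle2[of "f (y + \<tau> *\<^sub>R (w - y))" "f y" c] by (simp add: dist_norm)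
qed

lemma not_R_regular_rel_nearest_point_sequences:
  fixes h :: "nat \<Rightarrow> 'g::real_normed_vector \<Rightarrow> 'h::{real_inner, complete_space} \<Rightarrow> real"
  assumes mn: "m \<le> n" and cont_h: "\<And>i p. i \<in> {1..n} \<Longrightarrow> continuous_on UNIV (h i p)"
    and nreg: "\<not> R_regular_rel h m n (dom_map (feas_map h m n)) p0 x0"
  obtains P W Y where "P \<longlonglongrightarrow> p0" "W \<longlonglongrightarrow> x0" "\<And>k. P k \<in> dom_map (feas_map h m n)"
    "\<And>k. Y k \<in> proj_set (feas_map h m n (P k)) (W k)"
    "\<And>k. real (Suc k) * residual h m n (P k) (W k) < 3 * dist (Y k) (W k)"
proof -
  define F where "F = feas_map h m n"
  obtain P X where P: "\<And>k. dist (P k) p0 \<le> 1 / real (Suc k)"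
    and X: "\<And>k. dist (X k) x0 \<le> 1 / real (Suc k)" and P_dom: "\<And>k. P k \<in> dom_map F"
    and far: "\<And>k. real (Suc k) * residual h m n (P k) (X k) < infdist (X k) (F (P k))"
    using nreg unfolding F_def by (rule not_R_regular_rel_sequences) blast
  define D where "D k = infdist (X k) (F (P k))" for k
  define e where "e k = min (1 / real (Suc k)) (D k / (2 * real (Suc k)))" for k
  have D: "D k > 0" for k
    using far[of k] mult_nonneg_nonneg[OF of_nat_0_le_iff[of "Suc k"] residual_nonneg[of h m n "P k" "X k"]]
    unfolding D_def by linarith
  have "\<exists>w y. dist w (X k) < e k \<and> residual h m n (P k) w \<le> residual h m n (P k) (X k) + e k \<and>
      y \<in> proj_set (F (P k)) w" for k
  proof -
    have "F (P k) \<noteq> {}" using P_dom by (simp add: dom_map_def)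
    moreover have "e k > 0" using D[of k] by (simp add: e_def)
    ultimately show ?thesis
      unfolding F_def using exists_near_point_with_nearest_point[where h=h and p="P k" and x="X k", OF mn cont_h]
      by blast
  qed
  then obtain W Y where W: "\<And>k. dist (W k) (X k) < e k"
    and res_W: "\<And>k. residual h m n (P k) (W k) \<le> residual h m n (P k) (X k) + e k"
    and Y: "\<And>k. Y k \<in> proj_set (F (P k)) (W k)"
    by metis
  have "real (Suc k) * residual h m n (P k) (W k) < 3 * dist (Y k) (W k)" for k
  proof -
    have "D k / (2 * real (Suc k)) \<le> D k / 2"
      by (rule divide_left_mono) (use D[of k] in auto)
    then have e_le: "e k \<le> D k / (2 * real (Suc k))" "D k / (2 * real (Suc k)) \<le> D k / 2"
      by (simp_all add: e_def)
    have "D k \<le> infdist (W k) (F (P k)) + dist (X k) (W k)" unfolding D_def by (rule infdist_triangle)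
    moreover have "dist (Y k) (W k) = infdist (W k) (F (P k))" using Y[of k] by (simp add: proj_set_def)
    ultimately have "D k \<le> 2 * dist (Y k) (W k)"
      using W[of k] e_le dist_commute[of "X k" "W k"] by linarith
    have "real (Suc k) * residual h m n (P k) (W k)
        \<le> real (Suc k) * (residual h m n (P k) (X k) + D k / (2 * real (Suc k)))"
      using res_W[of k] e_le by (intro mult_left_mono) simp_all
    also have "\<dots> = real (Suc k) * residual h m n (P k) (X k) + D k / 2"
      by (simp add: field_simps)
    also have "\<dots> < 3 / 2 * D k" using far[of k] by (simp add: D_def)
    finally show ?thesis using \<open>D k \<le> 2 * dist (Y k) (W k)\<close> by simp
  qed
  moreover have "P \<longlonglongrightarrow> p0" by (rule LIMSEQ_if_dist_le_const_over_Suc[OF P])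
  moreover have "W \<longlonglongrightarrow> x0"
  proof (rule LIMSEQ_if_dist_le_const_over_Suc[where C=2])
    fix k
    have "dist (W k) x0 \<le> dist (W k) (X k) + dist (X k) x0" by (rule dist_triangle)
    then show "dist (W k) x0 \<le> 2 / real (Suc k)" using W[of k] X[of k] by (simp add: e_def)
  qed
  ultimately show thesis using that P_dom Y unfolding F_def by blast
qed

lemma R_regular_rel_if_uniform_multiplier_bound:
  fixes h :: "nat \<Rightarrow> 'g::real_normed_vector \<Rightarrow> 'h::{real_inner, complete_space} \<Rightarrow> real"
    and gradx :: "nat \<Rightarrow> 'g \<Rightarrow> 'h \<Rightarrow> 'h"
  assumes mn: "m \<le> n"
    and grad: "\<And>i p x. i \<in> {1..n} \<Longrightarrow> (h i p has_derivative (\<lambda>u. gradx i p x \<bullet> u)) (at x)"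
    and cont_grad: "\<And>i. i \<in> {1..n} \<Longrightarrow> continuous_on UNIV (\<lambda>(p, x). gradx i p x)"
    and lsc: "lsc_rel (feas_map h m n) (dom_map (feas_map h m n)) p0 x0"
    and M: "M > 0" and bound: "uniform_multiplier_bound M h gradx m n p0 x0"
  shows "R_regular_rel h m n (dom_map (feas_map h m n)) p0 x0"
proof (rule ccontr)
  define F where "F = feas_map h m n"
  have cont_h: "continuous_on UNIV (h i p)" if "i \<in> {1..n}" for i p
    using has_derivative_continuous[OF grad[OF that]] by (simp add: continuous_at_imp_continuous_on)
  assume "\<not> R_regular_rel h m n (dom_map (feas_map h m n)) p0 x0"
  with mn cont_h obtain P W Y where P: "P \<longlonglongrightarrow> p0" and W: "W \<longlonglongrightarrow> x0" and P_dom: "\<And>k. P k \<in> dom_map F"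
    and Y: "\<And>k. Y k \<in> proj_set (F (P k)) (W k)"
    and far: "\<And>k. real (Suc k) * residual h m n (P k) (W k) < 3 * dist (Y k) (W k)"
    unfolding F_def by (rule not_R_regular_rel_nearest_point_sequences) blast+
  have Y_F: "Y k \<in> F (P k)" for k using Y[of k] by (simp add: proj_set_def)
  have Y_ne_W: "Y k \<noteq> W k" for k
    using far[of k] mult_nonneg_nonneg[OF of_nat_0_le_iff[of "Suc k"] residual_nonneg[of h m n "P k" "W k"]]
    by auto
  then have "W k \<notin> F (P k)" for k using Y[of k] by (auto simp: proj_set_def)
  then have "\<forall>\<^sub>F k in sequentially. \<forall>y \<in> proj_set (F (P k)) (W k). LagrM M h gradx m n (W k) (P k) y \<noteq> {}"
    using bound P P_dom W unfolding uniform_multiplier_bound_def F_def by blast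
  moreover obtain \<delta> where \<delta>: "\<delta> > 0" and grad_near: "\<And>i p x. i \<in> {1..n} \<Longrightarrow> dist p p0 < \<delta> \<Longrightarrow>
      dist x x0 < \<delta> \<Longrightarrow> dist (gradx i p x) (gradx i p0 x0) < 1 / (4 * M)"
    using joint_continuity_uniform_radius[of "{1..n}" gradx "1 / (4 * M)"] cont_grad M by auto
  then have "\<forall>\<^sub>F k in sequentially. \<forall>y \<in> proj_set (F (P k)) (W k). dist y x0 < \<delta>"
    using lsc P P_dom W unfolding F_def by (intro lsc_rel_eventually_proj_set_near) auto
  moreover have "\<forall>\<^sub>F k in sequentially. dist (W k) x0 < \<delta>" using W \<delta> by (rule tendstoD)
  moreover have "\<forall>\<^sub>F k in sequentially. dist (P k) p0 < \<delta>" using P \<delta> by (rule tendstoD)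
  moreover obtain N where "6 * M < real N" using reals_Archimedean2 by blast
  then have "\<forall>\<^sub>F k in sequentially. 6 * M \<le> real (Suc k)"
    unfolding eventually_sequentially by (intro exI[of _ N]) auto
  ultimately have "\<forall>\<^sub>F k in sequentially. LagrM M h gradx m n (W k) (P k) (Y k) \<noteq> {} \<and>
      dist (Y k) x0 < \<delta> \<and> dist (W k) x0 < \<delta> \<and> dist (P k) p0 < \<delta> \<and> 6 * M \<le> real (Suc k)"
    by eventually_elim (use Y in blast)
  then obtain k lam where lam: "lam \<in> LagrM M h gradx m n (W k) (P k) (Y k)"
    and near: "dist (Y k) x0 < \<delta>" "dist (W k) x0 < \<delta>" "dist (P k) p0 < \<delta>"
    and k: "6 * M \<le> real (Suc k)"
    using eventually_happens'[OF sequentially_bot] by blast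
  have "norm (gradx i (P k) (Y k + \<tau> *\<^sub>R (W k - Y k)) - gradx i (P k) (Y k)) \<le> 1 / (2 * M)"
    if "i \<in> {1..n}" "\<tau> \<in> {0..1}" for i \<tau>
    using segment_oscillation_less[where f="gradx i (P k)" and c="gradx i p0 x0",
        OF grad_near[OF that(1) near(3)] near(1,2) that(2)] by simp
  then have "dist (Y k) (W k) \<le> 2 * M * residual h m n (P k) (W k)"
    using Y_F Y_ne_W unfolding F_def by (intro dist_le_residual_if_LagrM[OF grad _ _ M lam])
  then have "real (Suc k) * residual h m n (P k) (W k) < (6 * M) * residual h m n (P k) (W k)"
    using far[of k] by simp
  then show False using k residual_nonneg[of h m n "P k" "W k"]
    by (simp add: mult_less_cancel_right)
qed

theorem theorem8:
  fixes h :: "nat \<Rightarrow> 'g::real_normed_vector \<Rightarrow> 'h::{real_inner, complete_space} \<Rightarrow> real"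
    and gradx :: "nat \<Rightarrow> 'g \<Rightarrow> 'h \<Rightarrow> 'h"
    and m n :: nat and p0 :: 'g and x0 :: 'h
  assumes mn: "m \<le> n"
    and cont_h: "\<And>i. i \<in> {1..n} \<Longrightarrow> continuous_on UNIV (\<lambda>(p, x). h i p x)"
    and grad: "\<And>i p x. i \<in> {1..n} \<Longrightarrow>
                 (h i p has_derivative (\<lambda>u. gradx i p x \<bullet> u)) (at x)"
    and cont_grad: "\<And>i. i \<in> {1..n} \<Longrightarrow> continuous_on UNIV (\<lambda>(p, x). gradx i p x)"
    and gr: "(p0, x0) \<in> graph_map (feas_map h m n)"
    and lsc: "lsc_rel (feas_map h m n) (dom_map (feas_map h m n)) p0 x0"
  shows "R_regular_rel h m n (dom_map (feas_map h m n)) p0 x0 \<longleftrightarrow>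
     (\<exists>M>0. \<forall>pk :: nat \<Rightarrow> 'g. \<forall>vk :: nat \<Rightarrow> 'h.
        pk \<longlonglongrightarrow> p0 \<and> (\<forall>k. pk k \<in> dom_map (feas_map h m n)) \<and>
        vk \<longlonglongrightarrow> x0 \<and> (\<forall>k. vk k \<notin> feas_map h m n (pk k)) \<longrightarrow>
        (\<forall>\<^sub>F k in sequentially.
           \<forall>xk \<in> proj_set (feas_map h m n (pk k)) (vk k).
             LagrM M h gradx m n (vk k) (pk k) xk \<noteq> {}))"
proof -
  have "R_regular_rel h m n (dom_map (feas_map h m n)) p0 x0 \<longleftrightarrow>
      (\<exists>M>0. uniform_multiplier_bound M h gradx m n p0 x0)"
  proof
    assume "R_regular_rel h m n (dom_map (feas_map h m n)) p0 x0"
    with mn grad lsc obtain M where "M > 0" "uniform_multiplier_bound M h gradx m n p0 x0"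
      by (rule uniform_multiplier_bound_if_R_regular_rel)
    then show "\<exists>M>0. uniform_multiplier_bound M h gradx m n p0 x0" by blast
  next
    assume "\<exists>M>0. uniform_multiplier_bound M h gradx m n p0 x0"
    with mn grad cont_grad lsc show "R_regular_rel h m n (dom_map (feas_map h m n)) p0 x0"
      using R_regular_rel_if_uniform_multiplier_bound by blast
  qed
  then show ?thesis by (simp only: uniform_multiplier_bound_def)
qed

end
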